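(* Let $m\ge 2$ candidates and $n$ voters be given, let $2\le\ell\le m$, and run the randomized Minimax algorithm described in the context. For each candidate $c$, let $c_{\min}\in\arg\min_{c'\neq c}\mathrm{sc}_{\mathrm{MM}}(c,c')$. Then for every $\epsilon\in(0,1]$, the probability that the normalized score $\mathrm{S}[c]$ computed by the algorithm for $c$ differs from the true Minimax score $\mathrm{sc}_{\mathrm{MM}}(c)$ by a multiplicative factor of at least $1\pm\epsilon$ (i.e. $\mathrm{S}[c]<(1-\epsilon)\mathrm{sc}_{\mathrm{MM}}(c)$ or $\mathrm{S}[c]>(1+\epsilon)\mathrm{sc}_{\mathrm{MM}}(c)$) is at most $$m\exp\!\left(-\frac{\epsilon^2\ell^2\,\mathrm{sc}_{\mathrm{MM}}(c,c_{\min})}{6m^2}\right).$$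
   Context: An election consists of a set $V$ of $n$ voters and a set $C$ of $m$ candidates; each voter $v$ has a strict linear order $\succ_v$ over $C$. For $c,c'\in C$, $\mathrm{sc}_{\mathrm{MM}}(c,c')=|\{v\in V: c\succ_v c'\}|$, and the Minimax score is $\mathrm{sc}_{\mathrm{MM}}(c)=\min_{c'\neq c}\mathrm{sc}_{\mathrm{MM}}(c,c')$; the Minimax rule selects the candidates with maximal Minimax score. Randomized Minimax algorithm: set $\mathrm{S}[c,c']=0$ for all $c,c'$. Independently for each voter $v$, choose a uniformly random $S_v\subseteq C$ with $|S_v|=\ell$ and ask $v$ to rank $S_v$; for every ordered pair of distinct $c,c'\in S_v$ with $c\succ_v c'$, increase $\mathrm{S}[c,c']$ by 1. Then for each $c$ set $\mathrm{S}[c]=n\cdot\min\{\mathrm{S}[c,c']/(\mathrm{S}[c,c']+\mathrm{S}[c',c]) : c'\neq c,\ \mathrm{S}[c,c']+\mathrm{S}[c',c]>0\}$, and return a candidate with maximal $\mathrm{S}[c]$. *)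

theory Defs
  imports "HOL-Probability.Probability"
begin

text \<open>Election: finite voter set V, finite candidate set C, preference profile
  P v = strict linear order of voter v on C, as a relation: (c, c') in P v means c is preferred to c'.\<close>

definition election :: "'v set \<Rightarrow> 'a set \<Rightarrow> ('v \<Rightarrow> ('a \<times> 'a) set) \<Rightarrow> bool" where
  "election V C P \<longleftrightarrow> finite V \<and> finite C \<and>
     (\<forall>v\<in>V. strict_linear_order_on C (P v) \<and> P v \<subseteq> C \<times> C)"

definition sc_pair :: "'v set \<Rightarrow> ('v \<Rightarrow> ('a \<times> 'a) set) \<Rightarrow> 'a \<Rightarrow> 'a \<Rightarrow> nat" where
  "sc_pair V P c c' = card {v \<in> V. (c, c') \<in> P v}"

definition sc_MM :: "'v set \<Rightarrow> 'a set \<Rightarrow> ('v \<Rightarrow> ('a \<times> 'a) set) \<Rightarrow> 'a \<Rightarrow> nat" where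
  "sc_MM V C P c = Min {sc_pair V P c c' | c'. c' \<in> C \<and> c' \<noteq> c}"

text \<open>Randomness of the algorithm: independently for each voter a uniformly random
  l-subset of C (voters outside V get the empty set, irrelevant).\<close>
definition sample_subsets :: "'v set \<Rightarrow> 'a set \<Rightarrow> nat \<Rightarrow> ('v \<Rightarrow> 'a set) pmf" where
  "sample_subsets V C l = Pi_pmf V {} (\<lambda>v. pmf_of_set {S. S \<subseteq> C \<and> card S = l})"

definition S_pair :: "'v set \<Rightarrow> ('v \<Rightarrow> ('a \<times> 'a) set) \<Rightarrow> ('v \<Rightarrow> 'a set) \<Rightarrow> 'a \<Rightarrow> 'a \<Rightarrow> nat" where
  "S_pair V P \<sigma> c c' = card {v \<in> V. c \<in> \<sigma> v \<and> c' \<in> \<sigma> v \<and> (c, c') \<in> P v}"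

definition S_ratios :: "'v set \<Rightarrow> 'a set \<Rightarrow> ('v \<Rightarrow> ('a \<times> 'a) set) \<Rightarrow> ('v \<Rightarrow> 'a set) \<Rightarrow> 'a \<Rightarrow> real set" where
  "S_ratios V C P \<sigma> c =
     {real (S_pair V P \<sigma> c c') / real (S_pair V P \<sigma> c c' + S_pair V P \<sigma> c' c) | c'.
        c' \<in> C \<and> c' \<noteq> c \<and> S_pair V P \<sigma> c c' + S_pair V P \<sigma> c' c > 0}"

text \<open>S[c] = n * min of the ratios; None if the minimum ranges over the empty set
  (then the algorithm produces no value, which we count as a failure).\<close>
definition S_score :: "'v set \<Rightarrow> 'a set \<Rightarrow> ('v \<Rightarrow> ('a \<times> 'a) set) \<Rightarrow> ('v \<Rightarrow> 'a set) \<Rightarrow> 'a \<Rightarrow> real option" where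
  "S_score V C P \<sigma> c =
     (if S_ratios V C P \<sigma> c = {} then None
      else Some (real (card V) * Min (S_ratios V C P \<sigma> c)))"

definition deviates :: "'v set \<Rightarrow> 'a set \<Rightarrow> ('v \<Rightarrow> ('a \<times> 'a) set) \<Rightarrow> real \<Rightarrow> 'a \<Rightarrow> ('v \<Rightarrow> 'a set) \<Rightarrow> bool" where
  "deviates V C P \<epsilon> c \<sigma> =
     (case S_score V C P \<sigma> c of
        None \<Rightarrow> True
      | Some s \<Rightarrow> s < (1 - \<epsilon>) * real (sc_MM V C P c) \<or> s > (1 + \<epsilon>) * real (sc_MM V C P c))"

end

theory Submission
  imports Defs
begin

text \<open>A voter contributes to \<open>S[c,c']\<close> or \<open>S[c',c]\<close> exactly when both candidates land in
  its sample, which happens independently with probability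
  \<open>q = l (l - 1) / (m (m - 1)) \<ge> l\<^sup>2 / (2 m\<^sup>2)\<close>.  If \<open>S[c]\<close> is too small, the rival attaining
  the minimum has an empirical share \<open>n S[c,c'] / (S[c,c'] + S[c',c])\<close> below
  \<open>(1 - \<epsilon>) sc(c,c')\<close>; if \<open>S[c]\<close> is too large (or undefined), the share of \<open>c_min\<close> is at
  least \<open>(1 + \<epsilon>) sc(c,c_min)\<close>.  Cleared of denominators, each of these \<open>m\<close> events says
  that a linear combination of the independent per-voter contributions is nonnegative, so
  the Chernoff bound at parameter \<open>t = 2 / (3n)\<close> together with
  \<open>e\<^sup>x \<le> 1 + x + 3x\<^sup>2/4\<close> for \<open>x \<le> 2/3\<close> bounds its probability by \<open>exp (-\<epsilon>\<^sup>2 q sc(c,c') / 3)\<close>,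
  and a union bound yields the factor \<open>m\<close>.\<close>

lemma exp_le_quadratic:
  fixes t :: real
  assumes "t \<le> 2/3"
  shows "exp t \<le> 1 + t + 3/4 * t\<^sup>2"
proof -
  obtain s where s: "\<bar>s\<bar> \<le> \<bar>t\<bar>"
    and "exp t = (\<Sum>m<3. t ^ m / fact m) + exp s / fact 3 * t ^ 3"
    using Maclaurin_exp_le[of t 3] by blast
  then have taylor: "exp t = 1 + t + t\<^sup>2/2 + exp s / 6 * t ^ 3"
    by (simp add: numeral_3_eq_3 fact_numeral power2_eq_square)
  show ?thesis
  proof (cases "t \<le> 0")
    case True
    then have "exp s / 6 * t ^ 3 \<le> 0"
      by (simp add: mult_nonneg_nonpos power3_eq_cube zero_le_mult_iff)
    then show ?thesis using taylor zero_le_power2[of t] by linarith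
  next
    case False
    have "exp s \<le> exp t" using s False by simp
    also have "\<dots> \<le> 1 + t + t\<^sup>2" using exp_bound[of t] False assms by simp
    also have "\<dots> \<le> 19/9"
      using power_mono[of t "2/3" 2] False assms by (simp add: power2_eq_square)
    finally have "exp s / 6 * t ^ 3 \<le> 19/54 * t * t\<^sup>2"
      using False by (simp add: power2_eq_square power3_eq_cube mult_right_mono)
    also have "\<dots> \<le> 19/54 * (2/3) * t\<^sup>2"
      using False assms by (intro mult_right_mono) auto
    finally show ?thesis using taylor zero_le_power2[of t] by linarith
  qed
qed

text \<open>The Chernoff exponent of \<open>deviation_event\<close> below, with \<open>a = sc(c,c')\<close> and
  \<open>b = sc(c',c)\<close>.\<close>
lemma exp_deviation_bound:
  fixes a b \<delta> :: real
  assumes a: "0 \<le> a" and b: "0 \<le> b" and \<delta>: "\<bar>\<delta>\<bar> \<le> 1"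
  defines "t \<equiv> 2 / (3 * (a + b))"
  shows "a * (exp (t * (\<delta> * (b - \<delta> * a))) - 1) + b * (exp (t * (- \<delta> * (1 + \<delta>) * a)) - 1)
           \<le> - (\<delta>\<^sup>2 * a / 3)"
proof (cases "a + b = 0")
  case True
  then have "a = 0" "b = 0" using a b by linarith+
  then show ?thesis by simp
next
  case False
  then have t: "t * (a + b) = 2/3" "0 \<le> t" using a b by (auto simp: t_def field_simps)
  define x where "x = t * (\<delta> * (b - \<delta> * a))"
  define y where "y = t * (- \<delta> * (1 + \<delta>) * a)"
  have "\<delta> * b \<le> a + b" "- \<delta> * a \<le> a + b"
    using mult_right_mono[of \<delta> 1 b] mult_right_mono[of "- \<delta>" 1 a] \<delta> a b by (auto simp: abs_le_iff)
  then have "t * (\<delta> * b) \<le> 2/3" "t * (- \<delta> * a) \<le> 2/3"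
    using mult_left_mono[OF _ t(2)] t(1) by (metis mult.commute)+
  moreover have "0 \<le> t * (\<delta>\<^sup>2 * a)" using t a by simp
  moreover have "x = t * (\<delta> * b) - t * (\<delta>\<^sup>2 * a)" "y = t * (- \<delta> * a) - t * (\<delta>\<^sup>2 * a)"
    unfolding x_def y_def by (simp_all add: algebra_simps power2_eq_square)
  ultimately have "exp x - 1 \<le> x + 3/4 * x\<^sup>2" "exp y - 1 \<le> y + 3/4 * y\<^sup>2"
    using exp_le_quadratic[of x] exp_le_quadratic[of y] by linarith+
  then have "a * (exp x - 1) + b * (exp y - 1) \<le> a * (x + 3/4 * x\<^sup>2) + b * (y + 3/4 * y\<^sup>2)"
    using a b by (intro add_mono mult_left_mono)
  also have "\<dots> = (a * x + b * y) + 3/4 * (a * x\<^sup>2 + b * y\<^sup>2)" by (simp add: algebra_simps)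
  also have "a * x + b * y = - (t * (a + b)) * \<delta>\<^sup>2 * a"
    unfolding x_def y_def by (simp add: algebra_simps power2_eq_square)
  also have "a * x\<^sup>2 + b * y\<^sup>2 = (t * (a + b))\<^sup>2 * \<delta>\<^sup>2 * a - t\<^sup>2 * \<delta>\<^sup>2 * (1 - \<delta>\<^sup>2) * a\<^sup>2 * (a + b)"
    unfolding x_def y_def by (simp add: algebra_simps power2_eq_square)
  also have "\<dots> \<le> (t * (a + b))\<^sup>2 * \<delta>\<^sup>2 * a"
    using a b \<delta> abs_square_le_1[of \<delta>] by (simp add: mult_nonneg_nonneg)
  finally show ?thesis
    unfolding x_def y_def t(1) by (simp add: power2_eq_square)
qed

lemma prob_Pi_pmf_sum_nonneg_le:
  fixes w :: "'i \<Rightarrow> real" and t :: real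
  assumes I: "finite I" and p: "finite (set_pmf p)" and t: "0 \<le> t"
  shows "measure_pmf.prob (Pi_pmf I d (\<lambda>_. p)) {\<sigma>. 0 \<le> (\<Sum>i\<in>I. if \<sigma> i \<in> B then w i else 0)}
           \<le> exp (measure_pmf.prob p B * (\<Sum>i\<in>I. exp (t * w i) - 1))"
proof -
  define M where "M = Pi_pmf I d (\<lambda>_. p)"
  define q where "q = measure_pmf.prob p B"
  define Z where "Z \<sigma> = (\<Sum>i\<in>I. if \<sigma> i \<in> B then w i else 0)" for \<sigma>
  define f where "f i S = exp (t * (if S \<in> B then w i else 0))" for i S
  have "finite (set_pmf M)"
    unfolding M_def using I p by (auto simp: set_Pi_pmf)
  then have integrable_M: "integrable M g" for g :: "_ \<Rightarrow> real"
    by (rule integrable_measure_pmf_finite)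
  have mgf: "exp (t * Z \<sigma>) = (\<Prod>i\<in>I. f i (\<sigma> i))" for \<sigma>
    unfolding Z_def f_def sum_distrib_left exp_sum[OF I] ..
  have f_expectation: "measure_pmf.expectation p (f i) = 1 + q * (exp (t * w i) - 1)" for i
  proof -
    have "f i = (\<lambda>S. 1 + (exp (t * w i) - 1) * indicator B S)"
      by (auto simp: f_def indicator_def)
    moreover have "measure_pmf.expectation p (\<lambda>S. 1 + (exp (t * w i) - 1) * indicator B S)
                     = 1 + (exp (t * w i) - 1) * q"
      by (subst Bochner_Integration.integral_add)
         (auto intro: integrable_measure_pmf_finite[OF p] simp: q_def)
    ultimately show ?thesis by simp
  qed
  have "measure_pmf.prob M {\<sigma>. 0 \<le> Z \<sigma>} = measure_pmf.expectation M (indicator {\<sigma>. 0 \<le> Z \<sigma>})"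
    by simp
  also have "\<dots> \<le> measure_pmf.expectation M (\<lambda>\<sigma>. exp (t * Z \<sigma>))"
    using t by (intro integral_mono integrable_M) (auto simp: indicator_def)
  also have "\<dots> = (\<Prod>i\<in>I. measure_pmf.expectation p (f i))"
    unfolding mgf M_def
    by (rule expectation_prod_Pi_pmf[OF I integrable_measure_pmf_finite[OF p]]) (simp add: f_def)
  also have "\<dots> \<le> (\<Prod>i\<in>I. exp (q * (exp (t * w i) - 1)))"
  proof (intro prod_mono conjI)
    fix i
    have "0 \<le> (1 - q) + q * exp (t * w i)"
      by (simp add: q_def measure_pmf.prob_le_1)
    then show "0 \<le> measure_pmf.expectation p (f i)"
      by (simp add: f_expectation algebra_simps)
    show "measure_pmf.expectation p (f i) \<le> exp (q * (exp (t * w i) - 1))"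
      unfolding f_expectation by (rule exp_ge_add_one_self)
  qed
  also have "\<dots> = exp (q * (\<Sum>i\<in>I. exp (t * w i) - 1))"
    unfolding sum_distrib_left exp_sum[OF I] ..
  finally show ?thesis unfolding M_def q_def Z_def .
qed

lemma choose_mult_falling2:
  assumes "2 \<le> l" "l \<le> m"
  shows "(m choose l) * (l * (l - 1)) = m * (m - 1) * ((m - 2) choose (l - 2))"
proof -
  have "2 * (n choose 2) = n * (n - 1)" for n :: nat
    by (metis Suc_1 binomial_absorption choose_one)
  then show ?thesis
    using choose_mult[OF assms] by (metis mult.assoc mult.left_commute)
qed

lemma square_ratio_le_falling_ratio:
  fixes l m :: real
  assumes "2 \<le> l" "1 < m"
  shows "l\<^sup>2 / (2 * m\<^sup>2) \<le> l * (l - 1) / (m * (m - 1))"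
proof -
  have "0 \<le> l * m * (m * (l - 2) + l)"
    using assms by (intro mult_nonneg_nonneg) auto
  then have "l\<^sup>2 * (m * (m - 1)) \<le> l * (l - 1) * (2 * m\<^sup>2)"
    by (simp add: algebra_simps power2_eq_square)
  then show ?thesis
    using assms by (simp add: divide_simps)
qed

lemma card_subsets_containing_pair:
  assumes fin: "finite C" and c: "c \<in> C" "c' \<in> C" "c \<noteq> c'" and l: "2 \<le> l"
  shows "card {S. S \<subseteq> C \<and> card S = l \<and> c \<in> S \<and> c' \<in> S} = (card C - 2) choose (l - 2)"
proof -
  define D where "D = C - {c, c'}"
  have finD: "finite D" using fin by (simp add: D_def)
  have eq: "{S. S \<subseteq> C \<and> card S = l \<and> c \<in> S \<and> c' \<in> S}
      = (\<lambda>T. insert c (insert c' T)) ` {T. T \<subseteq> D \<and> card T = l - 2}"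
  proof (intro equalityI subsetI)
    fix S assume "S \<in> {S. S \<subseteq> C \<and> card S = l \<and> c \<in> S \<and> c' \<in> S}"
    then have S: "S \<subseteq> C" "card S = l" "c \<in> S" "c' \<in> S" by auto
    then have "card (S - {c, c'}) = l - 2"
      using c finite_subset[OF S(1) fin] by (subst card_Diff_subset) auto
    moreover have "S - {c, c'} \<subseteq> D" "S = insert c (insert c' (S - {c, c'}))"
      using S by (auto simp: D_def)
    ultimately show "S \<in> (\<lambda>T. insert c (insert c' T)) ` {T. T \<subseteq> D \<and> card T = l - 2}"
      by blast
  next
    fix S assume "S \<in> (\<lambda>T. insert c (insert c' T)) ` {T. T \<subseteq> D \<and> card T = l - 2}"
    then obtain T where T: "T \<subseteq> D" "card T = l - 2" and S: "S = insert c (insert c' T)"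
      by auto
    have "c \<notin> T" "c' \<notin> T" using T(1) by (auto simp: D_def)
    then have "card S = l" using S T l c finite_subset[OF T(1) finD] by simp
    moreover have "S \<subseteq> C" using S T c by (auto simp: D_def)
    ultimately show "S \<in> {S. S \<subseteq> C \<and> card S = l \<and> c \<in> S \<and> c' \<in> S}" using S by auto
  qed
  have "inj_on (\<lambda>T. insert c (insert c' T)) {T. T \<subseteq> D \<and> card T = l - 2}"
    by (rule inj_on_inverseI[where g = "\<lambda>S. S - {c, c'}"]) (auto simp: D_def)
  moreover have "card D = card C - 2" using c fin by (simp add: D_def card_Diff_subset)
  ultimately show ?thesis unfolding eq using n_subsets[OF finD] by (simp add: card_image)
qed

lemma prob_pair_in_random_subset:
  assumes fin: "finite C" and c: "c \<in> C" "c' \<in> C" "c \<noteq> c'" and l: "2 \<le> l" "l \<le> card C"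
  shows "measure_pmf.prob (pmf_of_set {S. S \<subseteq> C \<and> card S = l}) {S. c \<in> S \<and> c' \<in> S}
           = real l * (real l - 1) / (real (card C) * (real (card C) - 1))"
proof -
  define SS where "SS = {S. S \<subseteq> C \<and> card S = l}"
  have card_SS: "card SS = card C choose l" unfolding SS_def by (rule n_subsets[OF fin])
  have "SS \<noteq> {}" "finite SS"
    using obtain_subset_with_card_n[OF l(2)] fin by (auto simp: SS_def intro: finite_subset[of _ "Pow C"])
  then have "measure_pmf.prob (pmf_of_set SS) {S. c \<in> S \<and> c' \<in> S}
               = real ((card C - 2) choose (l - 2)) / real (card C choose l)"
    using card_subsets_containing_pair[OF fin c l(1)] card_SS
    by (simp add: measure_pmf_of_set SS_def Int_def)
  also have "\<dots> = real l * (real l - 1) / (real (card C) * (real (card C) - 1))"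
  proof -
    have "real (card C choose l) * (real l * (real l - 1))
            = real (card C) * (real (card C) - 1) * real ((card C - 2) choose (l - 2))"
      using arg_cong[OF choose_mult_falling2[OF l], of real] l by (simp add: of_nat_diff)
    moreover have "0 < card C choose l" "real (card C) * (real (card C) - 1) \<noteq> 0"
      using l by auto
    ultimately show ?thesis by (simp add: field_simps)
  qed
  finally show ?thesis unfolding SS_def .
qed

lemma election_pref_swap:
  assumes "election V C P" "v \<in> V" "c \<in> C" "c' \<in> C" "c \<noteq> c'"
  shows "(c', c) \<in> P v \<longleftrightarrow> (c, c') \<notin> P v"
proof -
  have "strict_linear_order_on C (P v)" using assms by (auto simp: election_def)
  then have "trans (P v)" "irrefl (P v)" "total_on C (P v)"
    by (auto simp: strict_linear_order_on_def)
  then show ?thesis using assms(3-5) by (auto simp: total_on_def irrefl_def dest: transD)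
qed

lemma sc_pair_add_swap:
  assumes "election V C P" "c \<in> C" "c' \<in> C" "c \<noteq> c'"
  shows "sc_pair V P c c' + sc_pair V P c' c = card V"
proof -
  have "{v \<in> V. (c, c') \<in> P v} \<union> {v \<in> V. (c', c) \<in> P v} = V"
       "{v \<in> V. (c, c') \<in> P v} \<inter> {v \<in> V. (c', c) \<in> P v} = {}"
    using election_pref_swap[OF assms(1) _ assms(2-4)] by auto
  moreover have "finite V" using assms(1) by (simp add: election_def)
  ultimately show ?thesis
    unfolding sc_pair_def
    using card_Un_disjoint[of "{v \<in> V. (c, c') \<in> P v}" "{v \<in> V. (c', c) \<in> P v}"] by simp
qed

lemma sc_MM_eq_sc_pair:
  assumes "finite C" "c_min \<in> C" "c_min \<noteq> c"
    and "\<forall>c'\<in>C. c' \<noteq> c \<longrightarrow> sc_pair V P c c_min \<le> sc_pair V P c c'"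
  shows "sc_MM V C P c = sc_pair V P c c_min"
  unfolding sc_MM_def using assms by (intro Min_eqI) auto

lemma prob_S_pair_combination_nonneg_le:
  fixes \<alpha> \<beta> t :: real
  assumes el: "election V C P" and c: "c \<in> C" "c' \<in> C" "c \<noteq> c'"
    and l: "2 \<le> l" "l \<le> card C" and t: "0 \<le> t"
  shows "measure_pmf.prob (sample_subsets V C l)
           {\<sigma>. 0 \<le> \<alpha> * real (S_pair V P \<sigma> c c') + \<beta> * real (S_pair V P \<sigma> c' c)}
         \<le> exp (real l * (real l - 1) / (real (card C) * (real (card C) - 1)) *
              (real (sc_pair V P c c') * (exp (t * \<alpha>) - 1)
               + real (sc_pair V P c' c) * (exp (t * \<beta>) - 1)))"
proof -
  have finV: "finite V" and finC: "finite C" using el by (auto simp: election_def)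
  define SS where "SS = {S. S \<subseteq> C \<and> card S = l}"
  define B where "B = {S. c \<in> S \<and> c' \<in> S}"
  define w where "w v = (if (c, c') \<in> P v then \<alpha> else \<beta>)" for v
  have count: "real (card {v \<in> V. Q v}) = (\<Sum>v\<in>V. if Q v then 1 else 0)" for Q
    using finV by (simp add: sum.If_cases Int_def)
  have by_pref: "(\<Sum>v\<in>V. if (c, c') \<in> P v then f v else g v)
                 = (\<Sum>v\<in>V. (if (c, c') \<in> P v then f v else 0) + (if (c', c) \<in> P v then g v else 0))"
    for f g :: "_ \<Rightarrow> real"
    by (intro sum.cong refl) (auto simp: election_pref_swap[OF el _ c])
  have combination: "\<alpha> * real (S_pair V P \<sigma> c c') + \<beta> * real (S_pair V P \<sigma> c' c)
                      = (\<Sum>v\<in>V. if \<sigma> v \<in> B then w v else 0)" for \<sigma>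
  proof -
    have "(\<Sum>v\<in>V. if \<sigma> v \<in> B then w v else 0)
            = (\<Sum>v\<in>V. if (c, c') \<in> P v then (if \<sigma> v \<in> B then \<alpha> else 0) else (if \<sigma> v \<in> B then \<beta> else 0))"
      by (intro sum.cong refl) (simp add: w_def)
    then show ?thesis
      unfolding by_pref S_pair_def count sum_distrib_left sum.distrib[symmetric]
      by (auto intro!: sum.cong simp: B_def)
  qed
  have weights: "(\<Sum>v\<in>V. exp (t * w v) - 1)
                   = real (sc_pair V P c c') * (exp (t * \<alpha>) - 1) + real (sc_pair V P c' c) * (exp (t * \<beta>) - 1)"
  proof -
    have "(\<Sum>v\<in>V. exp (t * w v) - 1)
            = (\<Sum>v\<in>V. if (c, c') \<in> P v then exp (t * \<alpha>) - 1 else exp (t * \<beta>) - 1)"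
      by (intro sum.cong refl) (simp add: w_def)
    then show ?thesis
      unfolding by_pref sc_pair_def count sum_distrib_right sum.distrib[symmetric]
      by (auto intro!: sum.cong)
  qed
  have "finite SS" unfolding SS_def using finC by (auto intro: finite_subset[of _ "Pow C"])
  moreover have "SS \<noteq> {}" using obtain_subset_with_card_n[OF l(2)] by (auto simp: SS_def)
  ultimately have "measure_pmf.prob (Pi_pmf V {} (\<lambda>_. pmf_of_set SS))
                     {\<sigma>. 0 \<le> (\<Sum>v\<in>V. if \<sigma> v \<in> B then w v else 0)}
                   \<le> exp (measure_pmf.prob (pmf_of_set SS) B * (\<Sum>v\<in>V. exp (t * w v) - 1))"
    by (intro prob_Pi_pmf_sum_nonneg_le finV t) simp
  then show ?thesis
    unfolding sample_subsets_def combination weights B_def SS_def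
    using prob_pair_in_random_subset[OF finC c l] by simp
qed

text \<open>For \<open>\<delta> > 0\<close> this is the event \<open>n \<cdot> S[c,c'] / (S[c,c'] + S[c',c]) \<ge> (1 + \<delta>) sc(c,c')\<close>,
  for \<open>\<delta> < 0\<close> the event \<open>\<le>\<close>; it is cleared of the denominator, so it also contains
  the samples in which \<open>c\<close> and \<open>c'\<close> are never compared.\<close>
definition deviation_event ::
    "'v set \<Rightarrow> ('v \<Rightarrow> ('a \<times> 'a) set) \<Rightarrow> real \<Rightarrow> 'a \<Rightarrow> 'a \<Rightarrow> ('v \<Rightarrow> 'a set) set" where
  "deviation_event V P \<delta> c c' =
     {\<sigma>. 0 \<le> \<delta> * (real (card V) * real (S_pair V P \<sigma> c c')
                   - (1 + \<delta>) * real (sc_pair V P c c') * real (S_pair V P \<sigma> c c' + S_pair V P \<sigma> c' c))}"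

lemma deviation_event_if_no_comparison:
  assumes "S_pair V P \<sigma> c c' + S_pair V P \<sigma> c' c = 0"
  shows "\<sigma> \<in> deviation_event V P \<delta> c c'"
  using assms by (simp add: deviation_event_def)

lemma deviation_event_if_share:
  assumes "0 \<le> \<delta> * (real (card V) * real (S_pair V P \<sigma> c c') / real (S_pair V P \<sigma> c c' + S_pair V P \<sigma> c' c)
                     - (1 + \<delta>) * real (sc_pair V P c c'))"
  shows "\<sigma> \<in> deviation_event V P \<delta> c c'"
proof (cases "S_pair V P \<sigma> c c' + S_pair V P \<sigma> c' c = 0")
  case True
  then show ?thesis by (rule deviation_event_if_no_comparison)
next
  case False
  define n where "n = real (card V)"
  define X where "X = real (S_pair V P \<sigma> c c')"
  define D where "D = real (S_pair V P \<sigma> c c' + S_pair V P \<sigma> c' c)"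
  have "0 < D" using False unfolding D_def by linarith
  then have "\<delta> * (n * X - (1 + \<delta>) * real (sc_pair V P c c') * D)
               = D * (\<delta> * (n * X / D - (1 + \<delta>) * real (sc_pair V P c c')))"
    by (simp add: field_simps)
  also have "\<dots> \<ge> 0"
    using assms \<open>0 < D\<close> unfolding n_def X_def D_def by simp
  finally show ?thesis unfolding deviation_event_def n_def X_def D_def by simp
qed

lemma prob_deviation_event_le:
  assumes el: "election V C P" and c: "c \<in> C" "c' \<in> C" "c \<noteq> c'"
    and l: "2 \<le> l" "l \<le> card C" and \<delta>: "\<bar>\<delta>\<bar> \<le> 1"
  shows "measure_pmf.prob (sample_subsets V C l) (deviation_event V P \<delta> c c')
           \<le> exp (- (\<delta>\<^sup>2 * real l ^ 2 * real (sc_pair V P c c')) / (6 * real (card C) ^ 2))"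
proof -
  define a where "a = real (sc_pair V P c c')"
  define b where "b = real (sc_pair V P c' c)"
  define q where "q = real l * (real l - 1) / (real (card C) * (real (card C) - 1))"
  define t where "t = 2 / (3 * (a + b))"
  have ab: "0 \<le> a" "0 \<le> b" "real (card V) = a + b"
    using sc_pair_add_swap[OF el c] unfolding a_def b_def by (simp_all flip: of_nat_add)
  have q: "real l ^ 2 / (2 * real (card C) ^ 2) \<le> q"
    unfolding q_def using l by (intro square_ratio_le_falling_ratio) auto
  then have "0 \<le> q" by (rule order.trans[rotated]) simp
  have event: "deviation_event V P \<delta> c c'
          = {\<sigma>. 0 \<le> \<delta> * (b - \<delta> * a) * real (S_pair V P \<sigma> c c') + (- \<delta> * (1 + \<delta>) * a) * real (S_pair V P \<sigma> c' c)}"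
    unfolding deviation_event_def ab(3) a_def b_def by (simp add: algebra_simps)
  have "0 \<le> t" unfolding t_def using ab by simp
  then have "measure_pmf.prob (sample_subsets V C l) (deviation_event V P \<delta> c c')
               \<le> exp (q * (a * (exp (t * (\<delta> * (b - \<delta> * a))) - 1) + b * (exp (t * (- \<delta> * (1 + \<delta>) * a)) - 1)))"
    unfolding event q_def a_def b_def by (rule prob_S_pair_combination_nonneg_le[OF el c l])
  also have "\<dots> \<le> exp (q * - (\<delta>\<^sup>2 * a / 3))"
    using mult_left_mono[OF exp_deviation_bound[OF ab(1,2) \<delta>] \<open>0 \<le> q\<close>] unfolding t_def by simp
  also have "\<dots> \<le> exp (real l ^ 2 / (2 * real (card C) ^ 2) * - (\<delta>\<^sup>2 * a / 3))"
    using mult_right_mono_neg[OF q, of "- (\<delta>\<^sup>2 * a / 3)"] ab(1) by simp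
  finally show ?thesis by (simp add: a_def field_simps)
qed

lemma deviates_subset_deviation_events:
  assumes el: "election V C P" and c: "c \<in> C" and c_min: "c_min \<in> C" "c_min \<noteq> c"
    and minimal: "\<forall>c'\<in>C. c' \<noteq> c \<longrightarrow> sc_pair V P c c_min \<le> sc_pair V P c c'"
    and \<epsilon>: "0 \<le> \<epsilon>" "\<epsilon> \<le> 1"
  shows "{\<sigma>. deviates V C P \<epsilon> c \<sigma>}
           \<subseteq> deviation_event V P \<epsilon> c c_min \<union> (\<Union>c'\<in>C - {c}. deviation_event V P (- \<epsilon>) c c')"
proof
  fix \<sigma> assume "\<sigma> \<in> {\<sigma>. deviates V C P \<epsilon> c \<sigma>}"
  then have dev: "deviates V C P \<epsilon> c \<sigma>" by simp
  have finC: "finite C" using el by (simp add: election_def)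
  define a where "a = real (sc_pair V P c c_min)"
  define n where "n = real (card V)"
  define share where "share c' = n * real (S_pair V P \<sigma> c c') / real (S_pair V P \<sigma> c c' + S_pair V P \<sigma> c' c)" for c'
  define R where "R = S_ratios V C P \<sigma> c"
  have "finite R" unfolding R_def S_ratios_def using finC by simp
  have in_R: "real (S_pair V P \<sigma> c c') / real (S_pair V P \<sigma> c c' + S_pair V P \<sigma> c' c) \<in> R"
    if "c' \<in> C" "c' \<noteq> c" "S_pair V P \<sigma> c c' + S_pair V P \<sigma> c' c \<noteq> 0" for c'
    using that unfolding R_def S_ratios_def by auto
  have upper: "\<sigma> \<in> deviation_event V P \<epsilon> c c_min" if "(1 + \<epsilon>) * a < n * Min R"
  proof (cases "S_pair V P \<sigma> c c_min + S_pair V P \<sigma> c_min c = 0")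
    case False
    then have "n * Min R \<le> share c_min"
      using mult_left_mono[OF Min_le[OF \<open>finite R\<close> in_R[OF c_min False]], of n]
      unfolding n_def share_def by simp
    with that \<epsilon>(1) show ?thesis
      unfolding a_def share_def n_def by (intro deviation_event_if_share mult_nonneg_nonneg) linarith+
  qed (rule deviation_event_if_no_comparison)
  have lower: "\<sigma> \<in> (\<Union>c'\<in>C - {c}. deviation_event V P (- \<epsilon>) c c')" if "R \<noteq> {}" "n * Min R < (1 - \<epsilon>) * a"
  proof -
    obtain c' where c': "c' \<in> C" "c' \<noteq> c" and "share c' = n * Min R"
      using Min_in[OF \<open>finite R\<close> \<open>R \<noteq> {}\<close>] unfolding R_def S_ratios_def share_def by auto
    moreover have "(1 - \<epsilon>) * a \<le> (1 - \<epsilon>) * real (sc_pair V P c c')"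
      using minimal c' \<epsilon>(2) unfolding a_def by (intro mult_left_mono) auto
    ultimately have "share c' \<le> (1 + - \<epsilon>) * real (sc_pair V P c c')"
      using that(2) by simp
    then have "\<sigma> \<in> deviation_event V P (- \<epsilon>) c c'"
      using \<epsilon>(1) unfolding share_def n_def
      by (intro deviation_event_if_share mult_nonpos_nonpos) auto
    with c' show ?thesis by blast
  qed
  have "sc_MM V C P c = sc_pair V P c c_min"
    using sc_MM_eq_sc_pair[OF finC c_min minimal] .
  then have "R = {} \<or> (R \<noteq> {} \<and> n * Min R < (1 - \<epsilon>) * a) \<or> (1 + \<epsilon>) * a < n * Min R"
    using dev unfolding deviates_def S_score_def R_def a_def n_def by (simp split: if_splits)
  then consider "R = {}" | "R \<noteq> {}" "n * Min R < (1 - \<epsilon>) * a" | "(1 + \<epsilon>) * a < n * Min R"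
    by blast
  then show "\<sigma> \<in> deviation_event V P \<epsilon> c c_min \<union> (\<Union>c'\<in>C - {c}. deviation_event V P (- \<epsilon>) c c')"
  proof cases
    case 1
    have "S_pair V P \<sigma> c c_min + S_pair V P \<sigma> c_min c = 0"
    proof (rule ccontr)
      assume "S_pair V P \<sigma> c c_min + S_pair V P \<sigma> c_min c \<noteq> 0"
      with in_R[OF c_min] 1 show False by simp
    qed
    then show ?thesis by (intro UnI1 deviation_event_if_no_comparison)
  next
    case 2
    then show ?thesis by (intro UnI2 lower)
  next
    case 3
    then show ?thesis by (intro UnI1 upper)
  qed
qed

theorem theorem3:
  fixes V :: "'v set" and C :: "'a set" and P :: "'v \<Rightarrow> ('a \<times> 'a) set"
    and l :: nat and c c_min :: 'a and \<epsilon> :: real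
  assumes "election V C P"
    and "card C \<ge> 2"
    and "2 \<le> l" and "l \<le> card C"
    and "c \<in> C"
    and "c_min \<in> C" and "c_min \<noteq> c"
    and "\<forall>c'\<in>C. c' \<noteq> c \<longrightarrow> sc_pair V P c c_min \<le> sc_pair V P c c'"
    and "0 < \<epsilon>" and "\<epsilon> \<le> 1"
  shows "measure_pmf.prob (sample_subsets V C l) {\<sigma>. deviates V C P \<epsilon> c \<sigma>}
           \<le> real (card C) * exp (- (\<epsilon>\<^sup>2 * real l ^ 2 * real (sc_pair V P c c_min))
                                  / (6 * real (card C) ^ 2))"
proof -
  note el = assms(1) and l = assms(3,4) and c = assms(5) and c_min = assms(6,7)
    and minimal = assms(8) and \<epsilon> = assms(9,10)
  have finC: "finite C" using el by (simp add: election_def)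
  define M where "M = sample_subsets V C l"
  define E where "E = exp (- (\<epsilon>\<^sup>2 * real l ^ 2 * real (sc_pair V P c c_min)) / (6 * real (card C) ^ 2))"
  have bound: "measure_pmf.prob M (deviation_event V P \<delta> c c') \<le> E"
    if "c' \<in> C" "c' \<noteq> c" "\<delta> = \<epsilon> \<or> \<delta> = - \<epsilon>" "sc_pair V P c c_min \<le> sc_pair V P c c'" for \<delta> c'
  proof -
    have \<delta>: "\<bar>\<delta>\<bar> \<le> 1" "\<delta>\<^sup>2 = \<epsilon>\<^sup>2" using that(3) \<epsilon> by auto
    have "measure_pmf.prob M (deviation_event V P \<delta> c c')
            \<le> exp (- (\<delta>\<^sup>2 * real l ^ 2 * real (sc_pair V P c c')) / (6 * real (card C) ^ 2))"
      unfolding M_def by (rule prob_deviation_event_le[OF el c that(1) that(2)[symmetric] l \<delta>(1)])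
    also have "\<dots> \<le> E"
      unfolding E_def \<delta>(2) using that(4) by (simp add: divide_right_mono mult_left_mono)
    finally show ?thesis .
  qed
  have "measure_pmf.prob M {\<sigma>. deviates V C P \<epsilon> c \<sigma>}
          \<le> measure_pmf.prob M (deviation_event V P \<epsilon> c c_min \<union> (\<Union>c'\<in>C - {c}. deviation_event V P (- \<epsilon>) c c'))"
    using deviates_subset_deviation_events[OF el c c_min minimal] \<epsilon>
    by (intro measure_pmf.finite_measure_mono) auto
  also have "\<dots> \<le> measure_pmf.prob M (deviation_event V P \<epsilon> c c_min)
                    + (\<Sum>c'\<in>C - {c}. measure_pmf.prob M (deviation_event V P (- \<epsilon>) c c'))"
    using finC
    by (intro order.trans[OF measure_Un_le] add_left_mono
        measure_pmf.finite_measure_subadditive_finite) auto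
  also have "\<dots> \<le> E + (\<Sum>c'\<in>C - {c}. E)"
    using c_min minimal by (intro add_mono sum_mono bound) auto
  also have "\<dots> = real (card C) * E"
    using assms(2) by (simp add: card_Diff_singleton[OF c] of_nat_diff algebra_simps)
  finally show ?thesis unfolding M_def E_def .
qed

end
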